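(* Let $H \subset L$ be light-cone regular and assume that the equation $f_h = \Phi(f_{h+v_1},\ldots,f_{h+v_N})$ has the Laurent property, the irreducibility and the coprimeness on $H$. Then it also has these three properties when considered over the coefficient field $K$: for every $h \in H \setminus H_0$, $f_h$ is an irreducible element of $K_{H_0}$, and for every pair $h_1, h_2 \in H$ with $h_1 \neq h_2$, $f_{h_1}$ and $f_{h_2}$ are coprime in $K_{H_0}$.
   Context: Let $R$ be a unique factorization domain with field of fractions $K$. Let $L$ be a finitely generated $\mathbb{Z}$-module (possibly with torsion). Fix distinct $v_1,\dots,v_N\in L$ which generate $L$ and are linearly independent over $\mathbb{Z}_{\ge 0}$ (i.e. $\sum_i a_i v_i=0$ with all $a_i\in\mathbb{Z}_{\ge0}$ forces all $a_i=0$), and an irreducible Laurent polynomial $\Phi\in R[Y_1^{\pm1},\dots,Y_N^{\pm1}]$ which is not a Laurent monomial and depends on every variable. Consider the equation $f_h=\Phi(f_{h+v_1},\dots,f_{h+v_N})$ ($h\in L$). Let $S=\{\sum_i a_iv_i : a_i\in\mathbb{Z}_{\ge0}\}$ and $h_1\le h_2$ iff $h_1-h_2\in S$. Assume $v_N$ is the minimum of $\{0,v_1,\dots,v_N\}$ for $\le$ and the equation can be solved as $f_{h+v_N}=\Psi(f_{h+v_1},\dots,f_{h+v_{N-1}},f_h)$ with $\Psi$ an irreducible Laurent polynomial over $R$. A nonempty $H\subset L$ is light-cone regular if for every $h\in H$ the set $\{h'\in H: h'\le h\}$ is finite and $\{h'\in L: h'\ge h\}\subset H$; its initial boundary is $H_0=\{h\in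 H:\ h+v_i\notin H\text{ for some }i\}$. The $f_{h}$ ($h\in H_0$) are algebraically independent indeterminates over $K$, and for $h\in H\setminus H_0$, $f_h$ is defined recursively by the equation in $K(f_{h_0}: h_0\in H_0)$. For $T\subset L$, $R_T=R[f_h^{\pm1}: h\in T]$, $K_T=K[f_h^{\pm1}: h\in T]$. Laurent property on $H$: $f_h\in R_{H_0}$ for all $h\in H$; irreducibility: every $f_h$ ($h\in H$) is irreducible in $R_{H_0}$ (units count as irreducible); coprimeness: $f_{h_1},f_{h_2}$ coprime in $R_{H_0}$ for all $h_1\neq h_2$ in $H$. *)

theory Defs
  imports "HOL-Library.Poly_Mapping" "HOL-Computational_Algebra.Factorial_Ring"
          "HOL-Computational_Algebra.Fraction_Field"
begin

text \<open>Laurent polynomials in variables of type 'v with coefficients in 'a: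
  finitely supported maps from Laurent monomials (finitely supported integer
  exponent vectors) to coefficients; multiplication is convolution.\<close>
type_synonym ('v, 'a) lpoly = "('v \<Rightarrow>\<^sub>0 int) \<Rightarrow>\<^sub>0 'a"

definition lvar :: "'v \<Rightarrow> ('v, 'a::{zero,one}) lpoly" where
  "lvar v = Poly_Mapping.single (Poly_Mapping.single v 1) 1"

definition lconst :: "'a::zero \<Rightarrow> ('v, 'a) lpoly" where
  "lconst c = Poly_Mapping.single 0 c"

definition lpoly_in :: "'v set \<Rightarrow> ('v, 'a::zero) lpoly set" where
  "lpoly_in T = {p :: ('v, 'a) lpoly. \<forall>m\<in>Poly_Mapping.keys p. Poly_Mapping.keys m \<subseteq> T}"

definition unit_in :: "'a::comm_ring_1 set \<Rightarrow> 'a \<Rightarrow> bool" where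
  "unit_in S u \<longleftrightarrow> u \<in> S \<and> (\<exists>w\<in>S. u * w = 1)"

definition dvd_in :: "'a::comm_ring_1 set \<Rightarrow> 'a \<Rightarrow> 'a \<Rightarrow> bool" where
  "dvd_in S a b \<longleftrightarrow> a \<in> S \<and> b \<in> S \<and> (\<exists>c\<in>S. b = a * c)"

text \<open>Irreducible in S, where (as in the paper) units count as irreducible.\<close>
definition irred_in :: "'a::comm_ring_1 set \<Rightarrow> 'a \<Rightarrow> bool" where
  "irred_in S x \<longleftrightarrow> x \<in> S \<and> x \<noteq> 0 \<and>
     (\<forall>a\<in>S. \<forall>b\<in>S. x = a * b \<longrightarrow> unit_in S a \<or> unit_in S b)"

definition coprime_in :: "'a::comm_ring_1 set \<Rightarrow> 'a \<Rightarrow> 'a \<Rightarrow> bool" where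
  "coprime_in S x y \<longleftrightarrow> (\<forall>d. dvd_in S d x \<and> dvd_in S d y \<longrightarrow> unit_in S d)"

text \<open>\<open>lpoly_sat N P c x y\<close> expresses y = P(x_0,...,x_{N-1}) for a Laurent
  polynomial P in the variables 0..N-1 (coefficients mapped by c), in
  denominator-cleared form: for every exponent vector d making P * Y^d a
  polynomial, y * x^d = (P * Y^d)(x).\<close>
definition lpoly_sat :: "nat \<Rightarrow> (nat, 'a::zero) lpoly \<Rightarrow> ('a \<Rightarrow> 'b::comm_ring_1)
     \<Rightarrow> (nat \<Rightarrow> 'b) \<Rightarrow> 'b \<Rightarrow> bool" where
  "lpoly_sat N P c x y \<longleftrightarrow>
     (\<forall>d::nat \<Rightarrow> nat. (\<forall>m\<in>Poly_Mapping.keys P. \<forall>i<N. 0 \<le> Poly_Mapping.lookup m i + int (d i)) \<longrightarrow>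
        y * (\<Prod>i<N. x i ^ d i) =
        (\<Sum>m\<in>Poly_Mapping.keys P. c (Poly_Mapping.lookup P m) * (\<Prod>i<N. x i ^ nat (Poly_Mapping.lookup m i + int (d i)))))"

definition fract_of :: "'a::idom \<Rightarrow> 'a fract" where
  "fract_of r = Fract r 1"

definition nsm :: "nat \<Rightarrow> 'l::ab_group_add \<Rightarrow> 'l" where
  "nsm n y = (\<Sum>_\<in>{..<n}. y)"

definition cone :: "nat \<Rightarrow> (nat \<Rightarrow> 'l::ab_group_add) \<Rightarrow> 'l set" where
  "cone N v = {\<Sum>i<N. nsm (a i) (v i) | a. True}"

definition cle :: "nat \<Rightarrow> (nat \<Rightarrow> 'l::ab_group_add) \<Rightarrow> 'l \<Rightarrow> 'l \<Rightarrow> bool" where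
  "cle N v h1 h2 \<longleftrightarrow> h1 - h2 \<in> cone N v"

definition light_cone_regular :: "nat \<Rightarrow> (nat \<Rightarrow> 'l::ab_group_add) \<Rightarrow> 'l set \<Rightarrow> bool" where
  "light_cone_regular N v H \<longleftrightarrow> H \<noteq> {} \<and>
     (\<forall>h\<in>H. finite {h'\<in>H. cle N v h' h} \<and> {h'. cle N v h h'} \<subseteq> H)"

definition init_boundary :: "nat \<Rightarrow> (nat \<Rightarrow> 'l::ab_group_add) \<Rightarrow> 'l set \<Rightarrow> 'l set" where
  "init_boundary N v H = {h\<in>H. \<exists>i<N. h + v i \<notin> H}"

end

theory Submission
  imports Defs
begin

text \<open>
  Everything rests on Gauss's lemma for Laurent polynomials over the factorial ring R: a prime
  of R dividing all coefficients of a product divides all coefficients of one factor (the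
  product of the top slices in one variable is the top slice of the product, so induct on the
  variables). Hence in \<open>c f = a b\<close> with a constant \<open>c \<in> R\<close>, the prime factors of \<open>c\<close> can be distributed over \<open>a\<close> and \<open>b\<close>.

  Clearing denominators turns a factorisation \<open>f = D E\<close> over K of an irreducible
  \<open>f \<in> R_T\<close> into one of this shape, so \<open>D\<close> or \<open>E\<close> is a constant times a unit of \<open>R_T\<close>:
  \<open>f\<close> stays irreducible over K. If \<open>D\<close> is a non-unit common divisor of \<open>f\<^sub>1\<close> and \<open>f\<^sub>2\<close>
  over K, then \<open>c\<^sub>1 f\<^sub>1 = c\<^sub>2 f\<^sub>2 u\<close> with constants \<open>c\<^sub>i\<close> and a unit \<open>u\<close> of \<open>R_T\<close>, and
  distributing \<open>c\<^sub>1\<close> writes \<open>f\<^sub>1 = b g\<close> with \<open>b\<close> a common divisor of \<open>f\<^sub>1\<close>, \<open>f\<^sub>2\<close> in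
  \<open>R_T\<close> and \<open>g\<close> a constant over K. So \<open>b\<close> is a unit, hence so are \<open>f\<^sub>1\<close> over K and its
  divisor \<open>D\<close>.
\<close>

lemma lookup_mult_finite_sum:
  fixes f g :: "'m::monoid_add \<Rightarrow>\<^sub>0 'a::semiring_0"
  assumes "finite A" "finite B" "Poly_Mapping.keys f \<subseteq> A" "Poly_Mapping.keys g \<subseteq> B"
  shows "Poly_Mapping.lookup (f * g) k =
    (\<Sum>l\<in>A. \<Sum>q\<in>B. (Poly_Mapping.lookup f l * Poly_Mapping.lookup g q when k = l + q))"
proof -
  have inner: "(\<Sum>q. (Poly_Mapping.lookup g q when k = l + q)) =
      (\<Sum>q\<in>B. (Poly_Mapping.lookup g q when k = l + q))" for l
    by (rule Sum_any.expand_superset) (use assms in \<open>auto simp: in_keys_iff\<close>)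
  have "Poly_Mapping.lookup (f * g) k =
      (\<Sum>l. Poly_Mapping.lookup f l * (\<Sum>q\<in>B. (Poly_Mapping.lookup g q when k = l + q)))"
    by (simp add: lookup_mult inner)
  also have "\<dots> = (\<Sum>l\<in>A. Poly_Mapping.lookup f l * (\<Sum>q\<in>B. (Poly_Mapping.lookup g q when k = l + q)))"
    using assms(1,3) by (intro Sum_any.expand_superset) (auto simp: in_keys_iff dest!: mult_not_zero)
  finally show ?thesis
    by (simp add: sum_distrib_left mult_when)
qed

lemma map_mult_poly_mapping:
  fixes a b :: "'m::monoid_add \<Rightarrow>\<^sub>0 'a::semiring_0"
    and h :: "'a \<Rightarrow> 'b::semiring_0"
  assumes h0: "h 0 = 0" and h_add: "\<And>x y. h (x + y) = h x + h y"
    and h_mult: "\<And>x y. h (x * y) = h x * h y"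
  shows "Poly_Mapping.map h (a * b) = Poly_Mapping.map h a * Poly_Mapping.map h b"
proof (rule poly_mapping_eqI)
  fix k
  have lookup_map: "Poly_Mapping.lookup (Poly_Mapping.map h x) m = h (Poly_Mapping.lookup x m)" for x m
    by (simp add: map.rep_eq when_def h0)
  have keys_map: "Poly_Mapping.keys (Poly_Mapping.map h x) \<subseteq> Poly_Mapping.keys x" for x
    by (auto simp: in_keys_iff lookup_map h0)
  have h_sum: "h (sum g X) = (\<Sum>x\<in>X. h (g x))" for g and X :: "'c set"
    using sum_comp_morphism[of h g X, OF h0 h_add] by (simp add: comp_def)
  have h_when: "h (x when P) = (h x when P)" for x P
    by (simp add: when_def h0)
  show "Poly_Mapping.lookup (Poly_Mapping.map h (a * b)) k =
      Poly_Mapping.lookup (Poly_Mapping.map h a * Poly_Mapping.map h b) k"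
    using keys_map[of a] keys_map[of b]
    by (simp add: lookup_map lookup_mult_finite_sum[of "Poly_Mapping.keys a" "Poly_Mapping.keys b"]
        h_sum h_when h_mult)
qed

lemma lookup_lconst_mult [simp]:
  "Poly_Mapping.lookup (lconst c * x) m = c * Poly_Mapping.lookup x m"
  by (simp add: lconst_def mult_map_scale_conv_mult[symmetric] map.rep_eq when_def)

lemma lconst_mult_lconst: "lconst a * lconst b = lconst (a * b)"
  by (simp add: lconst_def mult_single)

lemma lconst_one [simp]: "lconst 1 = 1"
  by (simp add: lconst_def)

lemma lconst_mult_assoc: "lconst a * (lconst b * x) = lconst (a * b) * x"
  by (simp add: mult.assoc[symmetric] lconst_mult_lconst)

lemma keys_lconst_mult:
  fixes x :: "('v, 'a::idom) lpoly"
  shows "c \<noteq> 0 \<Longrightarrow> Poly_Mapping.keys (lconst c * x) = Poly_Mapping.keys x"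
  by (auto simp: in_keys_iff)

lemma lconst_mult_cancel:
  fixes x y :: "('v, 'a::idom) lpoly"
  assumes "c \<noteq> 0" "lconst c * x = lconst c * y"
  shows "x = y"
proof (rule poly_mapping_eqI)
  fix k
  have "Poly_Mapping.lookup (lconst c * x) k = Poly_Mapping.lookup (lconst c * y) k"
    using assms(2) by simp
  then show "Poly_Mapping.lookup x k = Poly_Mapping.lookup y k"
    using assms(1) by simp
qed

lemma lpoly_in_lconst: "lconst c \<in> lpoly_in T"
  by (auto simp: lpoly_in_def lconst_def)

lemma lpoly_in_mult:
  fixes a b :: "('v, 'a::comm_semiring_0) lpoly"
  assumes "a \<in> lpoly_in T" "b \<in> lpoly_in T"
  shows "a * b \<in> lpoly_in T"
  unfolding lpoly_in_def mem_Collect_eq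
proof
  fix m assume "m \<in> Poly_Mapping.keys (a * b)"
  then obtain x y where "m = x + y" "x \<in> Poly_Mapping.keys a" "y \<in> Poly_Mapping.keys b"
    using keys_mult by blast
  then show "Poly_Mapping.keys m \<subseteq> T"
    using assms keys_add[of x y] unfolding lpoly_in_def by blast
qed

lemma lpoly_in_lconst_mult_iff:
  fixes x :: "('v, 'a::idom) lpoly"
  shows "c \<noteq> 0 \<Longrightarrow> lconst c * x \<in> lpoly_in T \<longleftrightarrow> x \<in> lpoly_in T"
  by (simp add: lpoly_in_def keys_lconst_mult)


subsection \<open>Gauss's lemma\<close>

definition coeffs_dvd :: "'a::comm_semiring_1 \<Rightarrow> ('m \<Rightarrow>\<^sub>0 'a) \<Rightarrow> bool" where
  "coeffs_dvd p x \<longleftrightarrow> (\<forall>k. p dvd Poly_Mapping.lookup x k)"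

lemma coeffs_dvd_iff_lconst_mult:
  fixes x :: "('v, 'a::{idom, algebraic_semidom}) lpoly"
  assumes "p \<noteq> 0"
  shows "coeffs_dvd p x \<longleftrightarrow> (\<exists>y. x = lconst p * y)"
proof
  assume dvd: "coeffs_dvd p x"
  have "x = lconst p * Poly_Mapping.map (\<lambda>z. z div p) x"
  proof (rule poly_mapping_eqI)
    fix k
    show "Poly_Mapping.lookup x k = Poly_Mapping.lookup (lconst p * Poly_Mapping.map (\<lambda>z. z div p) x) k"
      using dvd[unfolded coeffs_dvd_def, rule_format, of k]
      by (simp add: map.rep_eq when_def dvd_mult_div_cancel)
  qed
  then show "\<exists>y. x = lconst p * y" ..
qed (auto simp: coeffs_dvd_def)

lemma coeffs_dvd_mult:
  fixes x y :: "('v, 'a::{idom, algebraic_semidom}) lpoly"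
  shows "p \<noteq> 0 \<Longrightarrow> coeffs_dvd p x \<Longrightarrow> coeffs_dvd p (x * y)"
  by (auto simp: coeffs_dvd_iff_lconst_mult mult.assoc)

definition monomials_agree_outside :: "'v set \<Rightarrow> ('v, 'a::zero) lpoly \<Rightarrow> bool" where
  "monomials_agree_outside V a \<longleftrightarrow>
     (\<forall>m\<in>Poly_Mapping.keys a. \<forall>m'\<in>Poly_Mapping.keys a. \<forall>w. w \<notin> V \<longrightarrow>
        Poly_Mapping.lookup m w = Poly_Mapping.lookup m' w)"

definition slice :: "'v \<Rightarrow> int \<Rightarrow> ('v, 'a::zero) lpoly \<Rightarrow> ('v, 'a) lpoly" where
  "slice v e a = Poly_Mapping.mapp (\<lambda>m z. if Poly_Mapping.lookup m v = e then z else 0) a"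

lemma lookup_slice:
  "Poly_Mapping.lookup (slice v e a) m =
     (if Poly_Mapping.lookup m v = e then Poly_Mapping.lookup a m else 0)"
  by (simp add: slice_def lookup_mapp when_def in_keys_iff)

lemma keys_slice:
  "Poly_Mapping.keys (slice v e a) = {m \<in> Poly_Mapping.keys a. Poly_Mapping.lookup m v = e}"
  by (auto simp: in_keys_iff lookup_slice split: if_splits)

lemma monomials_agree_outside_slice:
  "monomials_agree_outside (insert v V) a \<Longrightarrow> monomials_agree_outside V (slice v e a)"
  unfolding monomials_agree_outside_def keys_slice by (metis (mono_tags, lifting) insertE mem_Collect_eq)

lemma lookup_mult_top_slices:
  fixes a b :: "('v, 'a::comm_semiring_0) lpoly"
  assumes "\<forall>m\<in>Poly_Mapping.keys a. Poly_Mapping.lookup m v \<le> ea"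
    and "\<forall>m\<in>Poly_Mapping.keys b. Poly_Mapping.lookup m v \<le> eb"
  shows "Poly_Mapping.lookup (slice v ea a * slice v eb b) k =
    (if Poly_Mapping.lookup k v = ea + eb then Poly_Mapping.lookup (a * b) k else 0)"
proof -
  let ?A = "Poly_Mapping.keys a" and ?B = "Poly_Mapping.keys b"
  have "Poly_Mapping.lookup (slice v ea a * slice v eb b) k =
      (\<Sum>l\<in>?A. \<Sum>q\<in>?B. (Poly_Mapping.lookup (slice v ea a) l * Poly_Mapping.lookup (slice v eb b) q
        when k = l + q))"
    by (rule lookup_mult_finite_sum) (auto simp: keys_slice)
  also have "\<dots> = (\<Sum>l\<in>?A. \<Sum>q\<in>?B. if Poly_Mapping.lookup k v = ea + eb
      then (Poly_Mapping.lookup a l * Poly_Mapping.lookup b q when k = l + q) else 0)"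
  proof (intro sum.cong refl)
    fix l q assume "l \<in> ?A" "q \<in> ?B"
    then have "Poly_Mapping.lookup l v \<le> ea" "Poly_Mapping.lookup q v \<le> eb"
      using assms by blast+
    then show "(Poly_Mapping.lookup (slice v ea a) l * Poly_Mapping.lookup (slice v eb b) q when k = l + q) =
        (if Poly_Mapping.lookup k v = ea + eb
         then (Poly_Mapping.lookup a l * Poly_Mapping.lookup b q when k = l + q) else 0)"
      by (auto simp: lookup_slice when_def lookup_add)
  qed
  also have "\<dots> = (if Poly_Mapping.lookup k v = ea + eb then Poly_Mapping.lookup (a * b) k else 0)"
    by (simp add: lookup_mult_finite_sum[of ?A ?B])
  finally show ?thesis .
qed

lemma monomials_agree_outside_empty:
  fixes a :: "('v, 'a::zero) lpoly"
  assumes "monomials_agree_outside {} a" "m \<in> Poly_Mapping.keys a"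
  shows "a = Poly_Mapping.single m (Poly_Mapping.lookup a m)"
proof (rule poly_mapping_eqI)
  have "m' = m" if "m' \<in> Poly_Mapping.keys a" for m'
    using assms that unfolding monomials_agree_outside_def by (auto intro: poly_mapping_eqI)
  then show "Poly_Mapping.lookup a k = Poly_Mapping.lookup (Poly_Mapping.single m (Poly_Mapping.lookup a m)) k"
    for k
    by (cases "k = m") (auto simp: lookup_single in_keys_iff)
qed

lemma not_coeffs_dvd_mult_agree_outside:
  fixes a b :: "('v, 'a::comm_semiring_1) lpoly"
  assumes "finite V" "prime_elem p"
    and "monomials_agree_outside V a" "monomials_agree_outside V b" "a \<noteq> 0" "b \<noteq> 0"
    and "\<forall>m\<in>Poly_Mapping.keys a. \<not> p dvd Poly_Mapping.lookup a m"
    and "\<forall>m\<in>Poly_Mapping.keys b. \<not> p dvd Poly_Mapping.lookup b m"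
  shows "\<not> coeffs_dvd p (a * b)"
  using assms(1,3-)
proof (induction V arbitrary: a b rule: finite_induct)
  case empty
  obtain ma mb where ma: "ma \<in> Poly_Mapping.keys a" and mb: "mb \<in> Poly_Mapping.keys b"
    using empty.prems(3,4) by (metis ex_in_conv keys_eq_empty)
  have "a * b = Poly_Mapping.single (ma + mb) (Poly_Mapping.lookup a ma * Poly_Mapping.lookup b mb)"
    using monomials_agree_outside_empty[OF empty.prems(1) ma]
      monomials_agree_outside_empty[OF empty.prems(2) mb] mult_single by metis
  moreover have "\<not> p dvd Poly_Mapping.lookup a ma * Poly_Mapping.lookup b mb"
    using empty.prems(5,6) ma mb assms(2) by (simp add: prime_elem_dvd_mult_iff)
  ultimately show ?case
    unfolding coeffs_dvd_def by (metis lookup_single_eq)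
next
  case (insert v V)
  define ea where "ea = Max ((\<lambda>m. Poly_Mapping.lookup m v) ` Poly_Mapping.keys a)"
  define eb where "eb = Max ((\<lambda>m. Poly_Mapping.lookup m v) ` Poly_Mapping.keys b)"
  have keys_nonempty: "Poly_Mapping.keys a \<noteq> {}" "Poly_Mapping.keys b \<noteq> {}"
    using insert.prems(3,4) by auto
  have a_le: "\<forall>m\<in>Poly_Mapping.keys a. Poly_Mapping.lookup m v \<le> ea"
    and b_le: "\<forall>m\<in>Poly_Mapping.keys b. Poly_Mapping.lookup m v \<le> eb"
    unfolding ea_def eb_def by auto
  have "ea \<in> (\<lambda>m. Poly_Mapping.lookup m v) ` Poly_Mapping.keys a"
    "eb \<in> (\<lambda>m. Poly_Mapping.lookup m v) ` Poly_Mapping.keys b"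
    unfolding ea_def eb_def using keys_nonempty by (intro Max_in; simp)+
  then have "slice v ea a \<noteq> 0" "slice v eb b \<noteq> 0"
    by (auto simp: keys_slice simp flip: keys_eq_empty)
  moreover have "\<forall>m\<in>Poly_Mapping.keys (slice v ea a). \<not> p dvd Poly_Mapping.lookup (slice v ea a) m"
    "\<forall>m\<in>Poly_Mapping.keys (slice v eb b). \<not> p dvd Poly_Mapping.lookup (slice v eb b) m"
    using insert.prems(5,6) by (auto simp: keys_slice lookup_slice)
  ultimately have "\<not> coeffs_dvd p (slice v ea a * slice v eb b)"
    by (rule insert.IH[OF monomials_agree_outside_slice[OF insert.prems(1)]
          monomials_agree_outside_slice[OF insert.prems(2)]])
  then show ?case
    unfolding coeffs_dvd_def lookup_mult_top_slices[OF a_le b_le] by (auto split: if_splits)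
qed

lemma prime_coeffs_dvd_mult:
  fixes a b :: "('v, 'a::{idom, algebraic_semidom}) lpoly"
  assumes p: "prime_elem p" and "coeffs_dvd p (a * b)"
  shows "coeffs_dvd p a \<or> coeffs_dvd p b"
proof (rule ccontr)
  assume not_dvd: "\<not> (coeffs_dvd p a \<or> coeffs_dvd p b)"
  have p0: "p \<noteq> 0" using p by (rule prime_elem_not_zeroI)
  text \<open>Discard the coefficients divisible by \<open>p\<close>; the product of the remainders is still
    divisible by \<open>p\<close>.\<close>
  define drop_p :: "('v, 'a) lpoly \<Rightarrow> ('v, 'a) lpoly"
    where "drop_p = Poly_Mapping.mapp (\<lambda>m z. if p dvd z then 0 else z)"
  have lookup_drop_p: "Poly_Mapping.lookup (drop_p x) k =
      (if p dvd Poly_Mapping.lookup x k then 0 else Poly_Mapping.lookup x k)" for x k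
    by (auto simp: drop_p_def lookup_mapp when_def in_keys_iff)
  have dvd_rest: "coeffs_dvd p (x - drop_p x)" for x
    by (simp add: coeffs_dvd_def lookup_minus lookup_drop_p)
  have not_dvd_keys: "\<forall>m\<in>Poly_Mapping.keys (drop_p x). \<not> p dvd Poly_Mapping.lookup (drop_p x) m" for x
    by (auto simp: lookup_drop_p in_keys_iff)
  define a' b' where "a' = drop_p a" and "b' = drop_p b"
  have "a' * b' = a * b - (a - a') * b - (b - b') * a'"
    by (simp add: algebra_simps)
  then have "coeffs_dvd p (a' * b')"
    using assms(2) coeffs_dvd_mult[OF p0 dvd_rest] unfolding a'_def b'_def
    by (simp add: coeffs_dvd_def lookup_minus)
  moreover have "a' \<noteq> 0" "b' \<noteq> 0"
    using not_dvd unfolding a'_def b'_def coeffs_dvd_def by (metis dvd_0_right lookup_drop_p lookup_zero)+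
  moreover define V where
    "V = (\<Union>m\<in>Poly_Mapping.keys a' \<union> Poly_Mapping.keys b'. Poly_Mapping.keys m)"
  moreover have "finite V" "monomials_agree_outside V a'" "monomials_agree_outside V b'"
    unfolding monomials_agree_outside_def V_def by (auto simp: in_keys_iff)
  ultimately show False
    using not_coeffs_dvd_mult_agree_outside[OF _ p] not_dvd_keys unfolding a'_def b'_def by blast
qed

lemma prime_lconst_mult_eq_mult:
  fixes q :: "'a::{idom, algebraic_semidom}" and g a b :: "('v, 'a) lpoly"
  assumes q: "prime_elem q" and eq: "lconst q * g = a * b"
  shows "(\<exists>a1. a = lconst q * a1 \<and> g = a1 * b) \<or> (\<exists>b1. b = lconst q * b1 \<and> g = a * b1)"
proof -
  have q0: "q \<noteq> 0" using q by (rule prime_elem_not_zeroI)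
  have "coeffs_dvd q (a * b)"
    using eq coeffs_dvd_iff_lconst_mult[OF q0] by metis
  then consider a1 where "a = lconst q * a1" | b1 where "b = lconst q * b1"
    using prime_coeffs_dvd_mult[OF q] coeffs_dvd_iff_lconst_mult[OF q0] by blast
  then show ?thesis
  proof cases
    case (1 a1)
    with eq have "lconst q * g = lconst q * (a1 * b)"
      by (simp add: mult.assoc)
    with 1 show ?thesis
      using lconst_mult_cancel[OF q0] by blast
  next
    case (2 b1)
    with eq have "lconst q * g = lconst q * (a * b1)"
      by (simp add: mult.left_commute)
    with 2 show ?thesis
      using lconst_mult_cancel[OF q0] by blast
  qed
qed

lemma lconst_mult_eq_mult_split:
  fixes c :: "'a::{factorial_semiring, idom}" and f a b :: "('v, 'a) lpoly"
  shows "c \<noteq> 0 \<Longrightarrow> lconst c * f = a * b \<Longrightarrow>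
    \<exists>c1 c2 a' b'. c = c1 * c2 \<and> a = lconst c1 * a' \<and> b = lconst c2 * b'"
proof (induction c arbitrary: f a b rule: prime_divisors_induct)
  case zero
  then show ?case by simp
next
  case (unit u)
  then obtain w where "1 = u * w" by (auto elim: dvdE)
  then have "a = lconst u * (lconst w * a)" "b = lconst 1 * b"
    by (simp_all add: lconst_mult_assoc)
  then show ?case by (metis mult_1_right)
next
  case (factor q x)
  have x0: "x \<noteq> 0"
    using factor.prems(1) by auto
  have "lconst q * (lconst x * f) = a * b"
    using factor.prems(2) by (simp add: lconst_mult_assoc)
  from prime_lconst_mult_eq_mult[OF prime_imp_prime_elem[OF factor.hyps] this] show ?case
  proof (elim disjE exE conjE)
    fix a1 assume a: "a = lconst q * a1" and "lconst x * f = a1 * b"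
    then obtain k1 k2 a'' b'' where "x = k1 * k2" "a1 = lconst k1 * a''" "b = lconst k2 * b''"
      using factor.IH[OF x0] by blast
    then have "q * x = (q * k1) * k2" "a = lconst (q * k1) * a''" "b = lconst k2 * b''"
      using a by (simp_all add: lconst_mult_assoc mult.assoc)
    then show ?case by blast
  next
    fix b1 assume b: "b = lconst q * b1" and "lconst x * f = a * b1"
    then obtain k1 k2 a'' b'' where "x = k1 * k2" "a = lconst k1 * a''" "b1 = lconst k2 * b''"
      using factor.IH[OF x0] by blast
    then have "q * x = k1 * (q * k2)" "a = lconst k1 * a''" "b = lconst (q * k2) * b''"
      using b by (simp_all add: lconst_mult_assoc mult.left_commute[of q])
    then show ?case by blast
  qed
qed

lemma irred_lconst_mult_eq_mult:
  fixes c :: "'a::{factorial_semiring, idom}" and f d e :: "('v, 'a) lpoly"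
  assumes irr: "irred_in (lpoly_in T) f" and "c \<noteq> 0" "lconst c * f = d * e"
    and "d \<in> lpoly_in T" "e \<in> lpoly_in T"
  obtains c1 c2 d1 e1 where "c1 \<noteq> 0" "c2 \<noteq> 0" "d = lconst c1 * d1" "e = lconst c2 * e1"
    "f = d1 * e1" "d1 \<in> lpoly_in T" "e1 \<in> lpoly_in T"
    "unit_in (lpoly_in T) d1 \<or> unit_in (lpoly_in T) e1"
proof -
  obtain c1 c2 d1 e1 where split: "c = c1 * c2" "d = lconst c1 * d1" "e = lconst c2 * e1"
    using lconst_mult_eq_mult_split assms(2,3) by blast
  have c0: "c1 \<noteq> 0" "c2 \<noteq> 0"
    using split(1) assms(2) by auto
  have "lconst (c1 * c2) * f = lconst (c1 * c2) * (d1 * e1)"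
    using assms(3) unfolding split by (simp add: lconst_mult_lconst[symmetric] ac_simps)
  then have f: "f = d1 * e1"
    by (rule lconst_mult_cancel[rotated]) (simp add: c0)
  have "d1 \<in> lpoly_in T" "e1 \<in> lpoly_in T"
    using assms(4,5) c0 unfolding split by (simp_all add: lpoly_in_lconst_mult_iff)
  with irr f have "unit_in (lpoly_in T) d1 \<or> unit_in (lpoly_in T) e1"
    unfolding irred_in_def by blast
  with that c0 split(2,3) f \<open>d1 \<in> lpoly_in T\<close> \<open>e1 \<in> lpoly_in T\<close> show thesis
    by blast
qed


subsection \<open>Passing to the field of fractions\<close>

lemma fract_of_0 [simp]: "fract_of 0 = 0"
  by (simp add: fract_of_def Zero_fract_def)

lemma fract_of_1 [simp]: "fract_of 1 = 1"
  by (simp add: fract_of_def One_fract_def)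

lemma fract_of_eq_iff [simp]: "fract_of a = fract_of b \<longleftrightarrow> a = b"
  by (simp add: fract_of_def eq_fract)

lemma fract_of_eq_0_iff [simp]: "fract_of a = 0 \<longleftrightarrow> a = 0"
  using fract_of_eq_iff[of a 0] by simp

lemma fract_of_add: "fract_of (a + b) = fract_of a + fract_of b"
  by (simp add: fract_of_def)

lemma fract_of_mult: "fract_of (a * b) = fract_of a * fract_of b"
  by (simp add: fract_of_def)

abbreviation fract_lpoly :: "('v, 'a::idom) lpoly \<Rightarrow> ('v, 'a fract) lpoly" where
  "fract_lpoly a \<equiv> Poly_Mapping.map fract_of a"

lemma lookup_fract_lpoly: "Poly_Mapping.lookup (fract_lpoly a) k = fract_of (Poly_Mapping.lookup a k)"
  by (simp add: map.rep_eq when_def)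

lemma keys_fract_lpoly: "Poly_Mapping.keys (fract_lpoly a) = Poly_Mapping.keys a"
  by (simp add: in_keys_iff lookup_fract_lpoly set_eq_iff)

lemma fract_lpoly_eq_iff: "fract_lpoly a = fract_lpoly b \<longleftrightarrow> a = b"
  by (metis fract_of_eq_iff lookup_fract_lpoly poly_mapping_eqI)

lemma fract_lpoly_eq_0_iff [simp]: "fract_lpoly a = 0 \<longleftrightarrow> a = 0"
  by (auto simp: map_eq_zero_iff in_keys_iff intro: poly_mapping_eqI)

lemma fract_lpoly_mult: "fract_lpoly (a * b) = fract_lpoly a * fract_lpoly b"
  by (rule map_mult_poly_mapping) (simp_all add: fract_of_add fract_of_mult)

lemma fract_lpoly_lconst: "fract_lpoly (lconst c) = lconst (fract_of c)"
  by (simp add: lconst_def)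

lemma fract_lpoly_in_iff: "fract_lpoly a \<in> lpoly_in T \<longleftrightarrow> a \<in> lpoly_in T"
  by (simp add: lpoly_in_def keys_fract_lpoly)

lemma common_denominator:
  fixes X :: "'a::idom fract set"
  shows "finite X \<Longrightarrow> \<exists>\<alpha>. \<alpha> \<noteq> 0 \<and> (\<forall>x\<in>X. \<exists>r. fract_of \<alpha> * x = fract_of r)"
proof (induction X rule: finite_induct)
  case empty
  show ?case by (rule exI[of _ 1]) simp
next
  case (insert x X)
  then obtain \<alpha> where \<alpha>: "\<alpha> \<noteq> 0" "\<forall>y\<in>X. \<exists>r. fract_of \<alpha> * y = fract_of r" by blast
  obtain n d where x: "x = Fract n d" "d \<noteq> 0" by (cases x)
  have "fract_of (\<alpha> * d) * x = fract_of (\<alpha> * n)"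
    using x by (simp add: fract_of_def eq_fract)
  moreover have "\<exists>r. fract_of (\<alpha> * d) * y = fract_of r" if "y \<in> X" for y
  proof -
    obtain r where "fract_of \<alpha> * y = fract_of r" using \<alpha>(2) \<open>y \<in> X\<close> by blast
    then have "fract_of (\<alpha> * d) * y = fract_of (d * r)"
      by (simp add: fract_of_mult ac_simps)
    then show ?thesis ..
  qed
  ultimately show ?case
    using \<alpha>(1) x(2) by (intro exI[of _ "\<alpha> * d"]) auto
qed

lemma clear_denominators:
  fixes A :: "('v, 'a::idom fract) lpoly"
  assumes "A \<in> lpoly_in T"
  obtains \<alpha> a where "\<alpha> \<noteq> 0" "a \<in> lpoly_in T" "lconst (fract_of \<alpha>) * A = fract_lpoly a"
proof -
  obtain \<alpha> where \<alpha>: "\<alpha> \<noteq> 0"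
    and num: "\<forall>x\<in>Poly_Mapping.lookup A ` Poly_Mapping.keys A. \<exists>r. fract_of \<alpha> * x = fract_of r"
    using common_denominator[of "Poly_Mapping.lookup A ` Poly_Mapping.keys A"] by auto
  define numerator where "numerator x = (SOME r. fract_of \<alpha> * x = fract_of r)" for x
  have eq: "lconst (fract_of \<alpha>) * A = fract_lpoly (Poly_Mapping.map numerator A)"
  proof (rule poly_mapping_eqI)
    fix k
    show "Poly_Mapping.lookup (lconst (fract_of \<alpha>) * A) k =
        Poly_Mapping.lookup (fract_lpoly (Poly_Mapping.map numerator A)) k"
    proof (cases "Poly_Mapping.lookup A k = 0")
      case False
      then have "fract_of (numerator (Poly_Mapping.lookup A k)) = fract_of \<alpha> * Poly_Mapping.lookup A k"
        using someI_ex[OF num[rule_format]] unfolding numerator_def by (metis image_eqI in_keys_iff)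
      with False \<alpha>(1) show ?thesis
        by (auto simp: lookup_fract_lpoly map.rep_eq when_def)
    qed (simp add: lookup_fract_lpoly map.rep_eq)
  qed
  have "fract_lpoly (Poly_Mapping.map numerator A) \<in> lpoly_in T"
    unfolding eq[symmetric] using \<alpha> assms by (simp add: lpoly_in_lconst_mult_iff)
  with \<alpha> eq show thesis
    using that fract_lpoly_in_iff by blast
qed


lemma unit_in_mult:
  fixes u w :: "('v, 'a::comm_ring_1) lpoly"
  assumes "unit_in (lpoly_in T) u" "unit_in (lpoly_in T) w"
  shows "unit_in (lpoly_in T) (u * w)"
proof -
  obtain x y where "u \<in> lpoly_in T" "w \<in> lpoly_in T" "x \<in> lpoly_in T" "y \<in> lpoly_in T"
    "u * x = 1" "w * y = 1"
    using assms unfolding unit_in_def by blast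
  moreover have "(u * w) * (x * y) = (u * x) * (w * y)" by (simp add: ac_simps)
  ultimately show ?thesis
    unfolding unit_in_def by (metis lpoly_in_mult mult_1_right)
qed

lemma unit_in_right_factor:
  fixes x y :: "('v, 'a::comm_ring_1) lpoly"
  assumes "unit_in (lpoly_in T) (x * y)" "x \<in> lpoly_in T" "y \<in> lpoly_in T"
  shows "unit_in (lpoly_in T) y"
proof -
  obtain w where "w \<in> lpoly_in T" "x * y * w = 1"
    using assms(1) unfolding unit_in_def by blast
  then have "x * w \<in> lpoly_in T" "y * (x * w) = 1"
    using assms(2) by (simp_all add: lpoly_in_mult ac_simps)
  then show ?thesis
    using assms(3) unfolding unit_in_def by blast
qed

lemma unit_in_lconst:
  fixes c :: "'a::field"
  shows "c \<noteq> 0 \<Longrightarrow> unit_in (lpoly_in T) (lconst c :: ('v, 'a) lpoly)"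
  unfolding unit_in_def
  by (intro conjI lpoly_in_lconst bexI[of _ "lconst (inverse c)"]) (simp_all add: lconst_mult_lconst)

lemma unit_in_fract_lpoly:
  fixes u :: "('v, 'a::idom) lpoly"
  assumes "unit_in (lpoly_in T) u"
  shows "unit_in (lpoly_in T) (fract_lpoly u)"
proof -
  obtain w where "u \<in> lpoly_in T" "w \<in> lpoly_in T" "u * w = 1"
    using assms unfolding unit_in_def by blast
  moreover have "fract_lpoly (1 :: ('v, 'a) lpoly) = 1"
    by (metis fract_lpoly_lconst fract_of_1 lconst_one)
  ultimately show ?thesis
    unfolding unit_in_def by (metis fract_lpoly_in_iff fract_lpoly_mult)
qed

lemma unit_in_if_cleared_unit:
  fixes D :: "('v, 'a::idom fract) lpoly"
  assumes "\<delta> \<noteq> 0" "c \<noteq> 0" "D \<in> lpoly_in T" "unit_in (lpoly_in T) u"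
    and "lconst (fract_of \<delta>) * D = fract_lpoly (lconst c * u)"
  shows "unit_in (lpoly_in T) D"
proof -
  have "unit_in (lpoly_in T) (lconst (fract_of \<delta>) * D)"
    unfolding assms(5) fract_lpoly_mult fract_lpoly_lconst
    using assms(2,4) by (intro unit_in_mult unit_in_lconst unit_in_fract_lpoly) simp_all
  then show ?thesis
    using unit_in_right_factor lpoly_in_lconst assms(3) by blast
qed


lemma factorisation_over_fract_of_irred:
  fixes f :: "('v, 'a::{factorial_semiring, idom}) lpoly" and D E :: "('v, 'a fract) lpoly"
  assumes irr: "irred_in (lpoly_in T) f"
    and DE: "D \<in> lpoly_in T" "E \<in> lpoly_in T" "fract_lpoly f = D * E"
    and d: "\<delta> \<noteq> 0" "d \<in> lpoly_in T" "lconst (fract_of \<delta>) * D = fract_lpoly d"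
  shows "unit_in (lpoly_in T) D \<or> unit_in (lpoly_in T) E \<and>
     (\<exists>c w. c \<noteq> 0 \<and> unit_in (lpoly_in T) w \<and> d = lconst c * (f * w))"
proof -
  obtain \<epsilon> e where e: "\<epsilon> \<noteq> 0" "e \<in> lpoly_in T" "lconst (fract_of \<epsilon>) * E = fract_lpoly e"
    using clear_denominators[OF DE(2)] by blast
  have "fract_lpoly (lconst (\<delta> * \<epsilon>) * f) = (lconst (fract_of \<delta>) * D) * (lconst (fract_of \<epsilon>) * E)"
    by (simp add: fract_lpoly_mult fract_lpoly_lconst fract_of_mult DE(3) lconst_mult_lconst[symmetric]
        ac_simps)
  also have "\<dots> = fract_lpoly (d * e)"
    by (simp only: d(3) e(3) fract_lpoly_mult)
  finally have eq: "lconst (\<delta> * \<epsilon>) * f = d * e"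
    by (simp only: fract_lpoly_eq_iff)
  have nonzero: "\<delta> * \<epsilon> \<noteq> 0"
    using d(1) e(1) by simp
  obtain c1 c2 d1 e1 where c0: "c1 \<noteq> 0" "c2 \<noteq> 0"
    and split: "d = lconst c1 * d1" "e = lconst c2 * e1" "f = d1 * e1"
    and "d1 \<in> lpoly_in T" "e1 \<in> lpoly_in T"
    and units: "unit_in (lpoly_in T) d1 \<or> unit_in (lpoly_in T) e1"
    by (rule irred_lconst_mult_eq_mult[OF irr nonzero eq d(2) e(2)])
  from units show ?thesis
  proof
    assume "unit_in (lpoly_in T) d1"
    then show ?thesis
      using unit_in_if_cleared_unit[OF d(1) c0(1) DE(1)] d(3) split(1) by blast
  next
    assume e1_unit: "unit_in (lpoly_in T) e1"
    then obtain w where w: "w \<in> lpoly_in T" "e1 * w = 1"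
      unfolding unit_in_def by blast
    have "unit_in (lpoly_in T) E"
      using unit_in_if_cleared_unit[OF e(1) c0(2) DE(2) e1_unit] e(3) split(2) by blast
    moreover have "unit_in (lpoly_in T) w"
      using w \<open>e1 \<in> lpoly_in T\<close> unfolding unit_in_def by (metis mult.commute)
    moreover have "d = lconst c1 * (f * w)"
      using split(1,3) w(2) by (simp add: mult.assoc)
    ultimately show ?thesis
      using c0(1) by blast
  qed
qed

lemma irred_in_fract_lpoly:
  fixes f :: "('v, 'a::{factorial_semiring, idom}) lpoly"
  assumes irr: "irred_in (lpoly_in T) f"
  shows "irred_in (lpoly_in T) (fract_lpoly f)"
  unfolding irred_in_def
proof (intro conjI ballI impI)
  show "fract_lpoly f \<in> lpoly_in T" "fract_lpoly f \<noteq> 0"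
    using irr by (auto simp: irred_in_def fract_lpoly_in_iff)
  fix A B assume "A \<in> lpoly_in T" "B \<in> lpoly_in T" "fract_lpoly f = A * B"
  with clear_denominators[OF \<open>A \<in> lpoly_in T\<close>] show "unit_in (lpoly_in T) A \<or> unit_in (lpoly_in T) B"
    using factorisation_over_fract_of_irred[OF irr] by metis
qed

lemma unit_in_fract_lpoly_if_coprime_associates:
  fixes f1 f2 :: "('v, 'a::{factorial_semiring, idom}) lpoly"
  assumes coprime: "coprime_in (lpoly_in T) f1 f2"
    and f_S: "f1 \<in> lpoly_in T" "f2 \<in> lpoly_in T"
    and "c1 \<noteq> 0" "c2 \<noteq> 0" "unit_in (lpoly_in T) u"
    and eq: "lconst c1 * f1 = lconst c2 * (f2 * u)"
  shows "unit_in (lpoly_in T) (fract_lpoly f1)"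
proof -
  obtain u' where u': "u \<in> lpoly_in T" "u' \<in> lpoly_in T" "u * u' = 1"
    using assms(6) unfolding unit_in_def by blast
  obtain k1 k2 and g b :: "('v, 'a) lpoly" where
    k: "c1 = k1 * k2" "lconst c2 = lconst k1 * g" "f2 * u = lconst k2 * b"
    using lconst_mult_eq_mult_split[OF assms(4) eq] by blast
  have k0: "k1 \<noteq> 0" "k2 \<noteq> 0"
    using k(1) assms(4) by auto
  have "lconst (k1 * k2) * f1 = lconst (k1 * k2) * (g * b)"
    using eq unfolding k by (simp add: lconst_mult_lconst[symmetric] ac_simps)
  then have f1: "f1 = b * g"
    by (subst mult.commute, rule lconst_mult_cancel[rotated]) (simp add: k0)
  have f2: "f2 = b * (lconst k2 * u')"
    using arg_cong[OF k(3), of "\<lambda>x. x * u'"] u'(3) by (simp add: ac_simps)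
  have b_S: "b \<in> lpoly_in T"
    using k(3) k0(2) f_S(2) u'(1) by (metis lpoly_in_lconst_mult_iff lpoly_in_mult)
  have g_S: "g \<in> lpoly_in T"
    using k(2) k0(1) lpoly_in_lconst lpoly_in_lconst_mult_iff by metis
  have "lconst k2 * u' \<in> lpoly_in T"
    by (intro lpoly_in_mult lpoly_in_lconst u'(2))
  then have "dvd_in (lpoly_in T) b f1" "dvd_in (lpoly_in T) b f2"
    unfolding dvd_in_def using b_S f_S g_S f1 f2 by blast+
  then have b_unit: "unit_in (lpoly_in T) b"
    using coprime unfolding coprime_in_def by blast
  have "lconst (fract_of k1) * fract_lpoly g = lconst (fract_of k1) * lconst (fract_of c2 / fract_of k1)"
    using arg_cong[OF k(2), of fract_lpoly] k0(1)
    by (simp add: fract_lpoly_mult fract_lpoly_lconst lconst_mult_lconst)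
  then have "fract_lpoly g = lconst (fract_of c2 / fract_of k1)"
    by (rule lconst_mult_cancel[rotated]) (simp add: k0(1))
  then have "unit_in (lpoly_in T) (fract_lpoly g)"
    using assms(5) k0(1) by (simp add: unit_in_lconst)
  then show ?thesis
    unfolding f1 fract_lpoly_mult by (rule unit_in_mult[OF unit_in_fract_lpoly[OF b_unit]])
qed

lemma coprime_in_fract_lpoly:
  fixes f1 f2 :: "('v, 'a::{factorial_semiring, idom}) lpoly"
  assumes irr1: "irred_in (lpoly_in T) f1" and irr2: "irred_in (lpoly_in T) f2"
    and coprime: "coprime_in (lpoly_in T) f1 f2"
  shows "coprime_in (lpoly_in T) (fract_lpoly f1) (fract_lpoly f2)"
  unfolding coprime_in_def
proof (intro allI impI)
  fix D assume "dvd_in (lpoly_in T) D (fract_lpoly f1) \<and> dvd_in (lpoly_in T) D (fract_lpoly f2)"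
  then obtain E1 E2 where D: "D \<in> lpoly_in T"
    and E1: "E1 \<in> lpoly_in T" "fract_lpoly f1 = D * E1"
    and E2: "E2 \<in> lpoly_in T" "fract_lpoly f2 = D * E2"
    unfolding dvd_in_def by blast
  obtain \<delta> d where d: "\<delta> \<noteq> 0" "d \<in> lpoly_in T" "lconst (fract_of \<delta>) * D = fract_lpoly d"
    using clear_denominators[OF D] by blast
  show "unit_in (lpoly_in T) D"
  proof (rule ccontr)
    assume non_unit: "\<not> unit_in (lpoly_in T) D"
    obtain c1 w1 where c1: "c1 \<noteq> 0" "d = lconst c1 * (f1 * w1)" "unit_in (lpoly_in T) w1"
      using factorisation_over_fract_of_irred[OF irr1 D E1 d] non_unit by blast
    obtain c2 w2 where c2: "c2 \<noteq> 0" "d = lconst c2 * (f2 * w2)" "unit_in (lpoly_in T) w2"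
      using factorisation_over_fract_of_irred[OF irr2 D E2 d] non_unit by blast
    obtain e1 where e1: "e1 \<in> lpoly_in T" "w1 * e1 = 1"
      using c1(3) unfolding unit_in_def by blast
    have unit: "unit_in (lpoly_in T) (w2 * e1)"
      using c1(3) e1 by (intro unit_in_mult c2(3)) (auto simp: unit_in_def mult.commute)
    have "lconst c1 * f1 = lconst c1 * (f1 * w1) * e1"
      using e1(2) by (simp add: mult.assoc)
    also have "\<dots> = lconst c2 * (f2 * w2) * e1"
      using c1(2) c2(2) by simp
    also have "\<dots> = lconst c2 * (f2 * (w2 * e1))"
      by (simp add: mult.assoc)
    finally have "unit_in (lpoly_in T) (fract_lpoly f1)"
      using unit_in_fract_lpoly_if_coprime_associates[OF coprime _ _ c1(1) c2(1) unit] irr1 irr2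
      by (simp add: irred_in_def)
    then have "unit_in (lpoly_in T) D"
      using unit_in_right_factor[of T E1 D] E1 D by (simp add: mult.commute)
    with non_unit show False ..
  qed
qed

theorem lemma3p4:
  fixes N :: nat
    and v :: "nat \<Rightarrow> 'l::ab_group_add"
    and \<Phi> \<Psi> :: "(nat, 'r::{factorial_semiring, idom}) lpoly"
    and H :: "'l set"
    and f :: "'l \<Rightarrow> ('l, 'r) lpoly"
  assumes N_pos: "N \<ge> 1"
    and v_distinct: "inj_on v {..<N}"
    and v_generate: "\<forall>x::'l. \<exists>a b :: nat \<Rightarrow> nat.
                        x = (\<Sum>i<N. nsm (a i) (v i)) - (\<Sum>i<N. nsm (b i) (v i))"
    and v_indep: "\<forall>a :: nat \<Rightarrow> nat. (\<Sum>i<N. nsm (a i) (v i)) = 0 \<longrightarrow> (\<forall>i<N. a i = 0)"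
    and Phi_in: "\<Phi> \<in> lpoly_in {..<N}"
    and Phi_irred: "irred_in (lpoly_in {..<N}) \<Phi>" "\<not> unit_in (lpoly_in {..<N}) \<Phi>"
    and Phi_not_monomial: "card (Poly_Mapping.keys \<Phi>) \<noteq> 1"
    and Phi_depends: "\<forall>i<N. \<exists>m\<in>Poly_Mapping.keys \<Phi>. Poly_Mapping.lookup m i \<noteq> 0"
    and vN_min: "cle N v (v (N - 1)) 0" "\<forall>i<N. cle N v (v (N - 1)) (v i)"
    and Psi_in: "\<Psi> \<in> lpoly_in {..<N}"
    and Psi_irred: "irred_in (lpoly_in {..<N}) \<Psi>" "\<not> unit_in (lpoly_in {..<N}) \<Psi>"
    and Psi_solves: "lpoly_sat N \<Psi> lconst
                       (\<lambda>i. if i < N - 1 then lvar i else \<Phi>) (lvar (N - 1))"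
    and H_reg: "light_cone_regular N v H"
    and f_init: "\<forall>h\<in>init_boundary N v H. f h = lvar h"
    and f_rec: "\<forall>h\<in>H - init_boundary N v H.
                  lpoly_sat N \<Phi> lconst (\<lambda>i. f (h + v i)) (f h)"
    and laurent: "\<forall>h\<in>H. f h \<in> lpoly_in (init_boundary N v H)"
    and irred: "\<forall>h\<in>H. irred_in (lpoly_in (init_boundary N v H)) (f h)"
    and coprime: "\<forall>h1\<in>H. \<forall>h2\<in>H. h1 \<noteq> h2 \<longrightarrow>
                    coprime_in (lpoly_in (init_boundary N v H)) (f h1) (f h2)"
  shows "(\<forall>h\<in>H. Poly_Mapping.map fract_of (f h) \<in> lpoly_in (init_boundary N v H))
       \<and> (\<forall>h\<in>H - init_boundary N v H.
            irred_in (lpoly_in (init_boundary N v H)) (Poly_Mapping.map fract_of (f h)))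
       \<and> (\<forall>h1\<in>H. \<forall>h2\<in>H. h1 \<noteq> h2 \<longrightarrow>
            coprime_in (lpoly_in (init_boundary N v H))
              (Poly_Mapping.map fract_of (f h1)) (Poly_Mapping.map fract_of (f h2)))"
proof (intro conjI ballI impI)
  fix h assume "h \<in> H"
  then show "fract_lpoly (f h) \<in> lpoly_in (init_boundary N v H)"
    using laurent by (simp add: fract_lpoly_in_iff)
next
  fix h assume "h \<in> H - init_boundary N v H"
  then show "irred_in (lpoly_in (init_boundary N v H)) (fract_lpoly (f h))"
    using irred irred_in_fract_lpoly by blast
next
  fix h1 h2 assume "h1 \<in> H" "h2 \<in> H" "h1 \<noteq> h2"
  then show "coprime_in (lpoly_in (init_boundary N v H)) (fract_lpoly (f h1)) (fract_lpoly (f h2))"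
    using irred coprime coprime_in_fract_lpoly by blast
qed

end
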